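(* Let $q\ge2$, $N=2^q$, $b>0$, $h=b/N$, and let $A_q=h^2B_h$, where $B_h=(b_{i,j})_{i,j=1}^{N-1}$ is the symmetric Toeplitz matrix with $b_{i,i}=\frac{2N}3-1$, $b_{i,j}=\frac N6-1$ if $|i-j|=1$, and $b_{i,j}=-1$ if $|i-j|\ge2$. Let $D_q$ be the diagonal of $A_q$, let $\eta_0$ satisfy $\lambda_{\max}(D_q^{-1}A_q)\le\eta_0<3$, let $0<\omega<2/\eta_0$, let $0<\eta\le\omega(2-\omega\eta_0)$, and let $K_q=I-\omega D_q^{-1}A_q$. Then $\|K_q\nu\|_{A_q}^2\le\|\nu\|_{A_q}^2-\eta\|A_q\nu\|_{D_q^{-1}}^2$ for all $\nu\in\mathbb R^{N-1}$, and $$\|K_qT^q\|_{A_q}\le\sqrt{1-\eta/4}<1.$$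
   Context: For a symmetric positive definite $M$, $\|\nu\|_M=\sqrt{\nu^TM\nu}$ and for a matrix $X$, $\|X\|_M$ is the induced operator norm. The restriction $I_q^{q-1}:\mathbb R^{N-1}\to\mathbb R^{N/2-1}$ is $(I_q^{q-1}\nu)_i=\frac14(\nu_{2i-1}+2\nu_{2i}+\nu_{2i+1})$, the prolongation is $I_{q-1}^q=2(I_q^{q-1})^T$, the coarse matrix is $A_{q-1}=I_q^{q-1}A_qI_{q-1}^q$, and $T^q=I-I_{q-1}^qA_{q-1}^{-1}I_q^{q-1}A_q$. $K_q$ is the damped Jacobi iteration matrix and $K_qT^q$ the two-grid iteration matrix. $A_q$ is the piecewise linear finite element stiffness matrix of the nonlocal operator $u\mapsto\int_0^b[u(x)-u(y)]dy$ with zero exterior condition. *)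

theory Defs
  imports "Jordan_Normal_Form.Matrix" "Jordan_Normal_Form.Char_Poly"
begin

text \<open>Matrices/vectors use 0-based indices; paper index i corresponds to i-1.\<close>

definition Bmat :: "nat \<Rightarrow> real mat" where
  "Bmat N = mat (N-1) (N-1) (\<lambda>(i,j).
     if i = j then 2 * real N / 3 - 1
     else if i = j + 1 \<or> j = i + 1 then real N / 6 - 1
     else -1)"

definition Aq :: "nat \<Rightarrow> real \<Rightarrow> real mat" where
  "Aq q b = (let N = 2^q; h = b / real N in h^2 \<cdot>\<^sub>m Bmat N)"

definition diagpart :: "real mat \<Rightarrow> real mat" where
  "diagpart A = mat (dim_row A) (dim_col A) (\<lambda>(i,j). if i = j then A $$ (i,i) else 0)"

definition diag_inv :: "real mat \<Rightarrow> real mat" where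
  "diag_inv D = mat (dim_row D) (dim_col D) (\<lambda>(i,j). if i = j then 1 / D $$ (i,i) else 0)"

definition minv :: "real mat \<Rightarrow> real mat" where
  "minv A = (SOME B. B \<in> carrier_mat (dim_row A) (dim_row A) \<and>
                      A * B = 1\<^sub>m (dim_row A) \<and> B * A = 1\<^sub>m (dim_row A))"

text \<open>Restriction I_q^{q-1}: (N/2-1) x (N-1), (I v)_i = (v_{2i-1} + 2 v_{2i} + v_{2i+1})/4 (1-based).\<close>
definition restr :: "nat \<Rightarrow> real mat" where
  "restr q = mat (2^q div 2 - 1) (2^q - 1) (\<lambda>(i,j).
     if j = 2*i \<or> j = 2*i + 2 then 1/4 else if j = 2*i + 1 then 1/2 else 0)"

definition prolong :: "nat \<Rightarrow> real mat" where
  "prolong q = 2 \<cdot>\<^sub>m transpose_mat (restr q)"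

definition Acoarse :: "nat \<Rightarrow> real \<Rightarrow> real mat" where
  "Acoarse q b = restr q * Aq q b * prolong q"

definition Tq :: "nat \<Rightarrow> real \<Rightarrow> real mat" where
  "Tq q b = 1\<^sub>m (2^q - 1) - prolong q * minv (Acoarse q b) * restr q * Aq q b"

definition Kq :: "nat \<Rightarrow> real \<Rightarrow> real \<Rightarrow> real mat" where
  "Kq q b \<omega> = 1\<^sub>m (2^q - 1) - \<omega> \<cdot>\<^sub>m (diag_inv (diagpart (Aq q b)) * Aq q b)"

definition vnormM :: "real mat \<Rightarrow> real vec \<Rightarrow> real" where
  "vnormM M v = sqrt (v \<bullet> (M *\<^sub>v v))"

definition opnormM :: "real mat \<Rightarrow> real mat \<Rightarrow> real" where
  "opnormM M X = Sup {vnormM M (X *\<^sub>v v) / vnormM M v | v.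
                       v \<in> carrier_vec (dim_col X) \<and> v \<noteq> 0\<^sub>v (dim_col X)}"

definition lambda_max :: "real mat \<Rightarrow> real" where
  "lambda_max M = Max {k. eigenvalue M k}"

end

theory Submission
  imports Defs "HOL-Analysis.Function_Topology" "HOL-Analysis.Convex"
begin

unbundle no inner_syntax

text \<open>The diagonal of \<open>A\<^sub>q\<close> is the constant \<open>d = h\<^sup>2 (2N/3 - 1)\<close>, so damped Jacobi is the
  Richardson iteration \<open>I - (\<omega>/d) A\<^sub>q\<close>, and since the Rayleigh quotient of a symmetric matrix is
  bounded by its largest eigenvalue, the hypothesis on \<open>\<lambda>\<^sub>m\<^sub>a\<^sub>x\<close> says
  \<open>u\<^sup>T A\<^sub>q u \<le> \<eta>\<^sub>0 d |u|\<^sup>2\<close>. Expanding \<open>\<parallel>v - (\<omega>/d) A\<^sub>q v\<parallel>\<^sup>2\<close> in the energy norm gives the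
  smoothing inequality.

  The coarse-grid correction \<open>T\<^sup>q\<close> is an energy-orthogonal projection (Galerkin orthogonality):
  it does not increase the energy, and its output \<open>w\<close> is energy-orthogonal to the range of the
  prolongation. Regrouping the quadratic form of \<open>B\<^sub>h = (N/6) tridiag(1,4,1) - 1 1\<^sup>T\<close> over the
  coarse cells \<open>[2i, 2i+2]\<close> and applying Cauchy-Schwarz to the sum gives
  \<open>v\<^sup>T B\<^sub>h v \<ge> (N/6) \<Sum> (r\<^sub>i\<^sup>2 + 4 t\<^sub>i\<^sup>2)\<close>, where \<open>r\<^sub>i\<close> is the defect of linear interpolation at the
  midpoint of cell \<open>i\<close> and \<open>t\<^sub>i\<close> half the difference across it. Hence \<open>A\<^sub>q\<close> is positive definite,
  and since prolongation is linear interpolation, sampling \<open>w\<close> at the coarse nodes gives the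
  approximation property \<open>d |w - I\<^sub>q\<^sub>-\<^sub>1\<^sup>q z|\<^sup>2 \<le> 4 \<parallel>w\<parallel>\<^sub>A\<^sup>2\<close>. Together with the orthogonality this
  yields \<open>d \<parallel>w\<parallel>\<^sub>A\<^sup>2 \<le> 4 |A\<^sub>q w|\<^sup>2\<close>, so the smoothing step removes at least the fraction \<open>\<eta>/4\<close> of the
  energy left by the coarse-grid correction.\<close>

section \<open>Quadratic forms and the largest eigenvalue\<close>

lemma scalar_prod_self_nonneg: "0 \<le> (v::real vec) \<bullet> v"
  using conjugate_square_ge_0_vec[of v] by simp

lemma scalar_prod_self_eq_0_iff:
  "(v::real vec) \<in> carrier_vec n \<Longrightarrow> v \<bullet> v = 0 \<longleftrightarrow> v = 0\<^sub>v n"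
  using conjugate_square_eq_0_vec[of v n] by simp

lemma smult_mat_mult_vec:
  "A \<in> carrier_mat nr nc \<Longrightarrow> v \<in> carrier_vec nc \<Longrightarrow> (k \<cdot>\<^sub>m A) *\<^sub>v v = k \<cdot>\<^sub>v (A *\<^sub>v (v::real vec))"
  by (rule eq_vecI) (auto simp: mult_mat_vec_def scalar_prod_def sum_distrib_left ac_simps)

lemma quadratic_form_smult_mat:
  assumes "A \<in> carrier_mat n n" and "v \<in> carrier_vec n"
  shows "v \<bullet> ((c \<cdot>\<^sub>m A) *\<^sub>v v) = c * (v \<bullet> (A *\<^sub>v (v::real vec)))"
  using assms by (simp add: smult_mat_mult_vec[of _ n n])

lemma symmetric_scalar_prod_commute:
  fixes A :: "real mat"
  assumes A: "A \<in> carrier_mat n n" and sym: "transpose_mat A = A"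
    and x: "x \<in> carrier_vec n" and y: "y \<in> carrier_vec n"
  shows "x \<bullet> (A *\<^sub>v y) = y \<bullet> (A *\<^sub>v x)"
proof -
  have "x \<bullet> (A *\<^sub>v y) = (transpose_mat A *\<^sub>v x) \<bullet> y"
    using transpose_vec_mult_scalar[OF A y x] by simp
  also have "\<dots> = y \<bullet> (A *\<^sub>v x)" using sym A x y by (simp add: comm_scalar_prod[of _ n])
  finally show ?thesis .
qed

lemma quadratic_form_diff:
  fixes A :: "real mat"
  assumes A: "A \<in> carrier_mat n n" and sym: "transpose_mat A = A"
    and x: "x \<in> carrier_vec n" and y: "y \<in> carrier_vec n"
  shows "(x - c \<cdot>\<^sub>v y) \<bullet> (A *\<^sub>v (x - c \<cdot>\<^sub>v y))
     = x \<bullet> (A *\<^sub>v x) - 2 * c * (y \<bullet> (A *\<^sub>v x)) + c^2 * (y \<bullet> (A *\<^sub>v y))"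
proof -
  have "A *\<^sub>v (x - c \<cdot>\<^sub>v y) = A *\<^sub>v x - c \<cdot>\<^sub>v (A *\<^sub>v y)"
    using A x y by (simp add: mult_minus_distrib_mat_vec[of _ n n] mult_mat_vec)
  moreover have "x \<bullet> (A *\<^sub>v y) = y \<bullet> (A *\<^sub>v x)"
    by (rule symmetric_scalar_prod_commute[OF A sym x y])
  ultimately show ?thesis
    using A x y by (simp add: minus_scalar_prod_distrib[of _ n] scalar_prod_minus_distrib[of _ n]
        power2_eq_square algebra_simps)
qed

lemma psd_quadratic_form_eq_0_imp_mult_eq_0:
  fixes S :: "real mat"
  assumes S: "S \<in> carrier_mat n n" and sym: "transpose_mat S = S"
    and psd: "\<And>u. u \<in> carrier_vec n \<Longrightarrow> 0 \<le> u \<bullet> (S *\<^sub>v u)"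
    and x: "x \<in> carrier_vec n" and x0: "x \<bullet> (S *\<^sub>v x) = 0"
  shows "S *\<^sub>v x = 0\<^sub>v n"
proof -
  define y where "y = S *\<^sub>v x"
  have y: "y \<in> carrier_vec n" using S x unfolding y_def by simp
  define a where "a = y \<bullet> y"
  define C where "C = y \<bullet> (S *\<^sub>v y)"
  have C: "0 \<le> C" unfolding C_def using psd y by simp
  \<comment> \<open>along the line \<open>x - t y\<close> the nonnegative form is \<open>C t\<^sup>2 - 2 a t\<close>, negative for small \<open>t > 0\<close> unless \<open>a = 0\<close>\<close>
  have line: "0 \<le> C * t^2 - 2 * a * t" for t
    using psd[of "x - t \<cdot>\<^sub>v y"] x y quadratic_form_diff[OF S sym x y, of t]
    unfolding x0 a_def C_def y_def by (simp add: algebra_simps)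
  have "a = 0"
  proof (rule ccontr)
    assume "a \<noteq> 0"
    then have a: "0 < a" using scalar_prod_self_nonneg[of y] unfolding a_def by linarith
    define t where "t = a / (C + 1)"
    have t: "0 < t" using a C unfolding t_def by simp
    have "C * t < 2 * a"
      using a C unfolding t_def by (simp add: field_simps) (simp add: add_nonneg_pos)
    then have "C * t^2 - 2 * a * t < 0"
      using t by (simp add: power2_eq_square algebra_simps mult_less_cancel_left_pos[of t "C * t" "2 * a"])
    then show False using line[of t] by linarith
  qed
  then show ?thesis using scalar_prod_self_eq_0_iff[OF y] unfolding a_def y_def by simp
qed

lemma quadratic_form_vec_eq:
  "(M::real mat) \<in> carrier_mat n n \<Longrightarrow>
     vec n f \<bullet> (M *\<^sub>v vec n f) = (\<Sum>i<n. \<Sum>j<n. f i * (M $$ (i,j) * f j))"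
  by (simp add: scalar_prod_def mult_mat_vec_def row_def sum_distrib_left atLeast0LessThan)

lemma quadratic_form_attains_max_on_sphere:
  fixes M :: "real mat"
  assumes M: "M \<in> carrier_mat n n" and n: "0 < n"
  obtains x where "x \<in> carrier_vec n" "x \<bullet> x = 1"
    "\<And>u. u \<in> carrier_vec n \<Longrightarrow> u \<bullet> u = 1 \<Longrightarrow> u \<bullet> (M *\<^sub>v u) \<le> x \<bullet> (M *\<^sub>v x)"
proof -
  define box where "box = PiE UNIV (\<lambda>i::nat. if i < n then {-1..1::real} else {0})"
  define S where "S = box \<inter> {f. (\<Sum>i<n. f i * f i) = 1}"
  define Q where "Q f = (\<Sum>i<n. \<Sum>j<n. f i * (M $$ (i,j) * f j))" for f :: "nat \<Rightarrow> real"
  have "compactin (product_topology (\<lambda>i. euclidean) UNIV) box"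
    unfolding box_def by (subst compactin_PiE) auto
  then have "compact S"
    unfolding S_def euclidean_product_topology
    by (intro compact_Int_closed closed_Collect_eq continuous_on_const)
       (auto intro!: continuous_intros continuous_on_product_coordinates)
  moreover have "(\<lambda>i. if i = 0 then 1 else 0) \<in> S"
    using n unfolding S_def box_def by (auto simp: PiE_iff if_distrib sum.delta cong: if_cong)
  moreover have "continuous_on UNIV Q"
    unfolding Q_def by (intro continuous_intros continuous_on_product_coordinates)
  then have "continuous_on S Q" by (rule continuous_on_subset) simp
  ultimately obtain f0 where f0: "f0 \<in> S" and max: "\<And>f. f \<in> S \<Longrightarrow> Q f \<le> Q f0"
    using continuous_attains_sup[of S Q] by blast
  show thesis
  proof
    show "vec n f0 \<in> carrier_vec n" by simp
    show "vec n f0 \<bullet> vec n f0 = 1"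
      using f0 unfolding S_def by (simp add: scalar_prod_def atLeast0LessThan)
  next
    fix u :: "real vec" assume u: "u \<in> carrier_vec n" and uu: "u \<bullet> u = 1"
    define f where "f i = (if i < n then u $ i else 0)" for i
    have sum1: "(\<Sum>i<n. f i * f i) = 1"
      using uu u unfolding f_def by (simp add: scalar_prod_def atLeast0LessThan)
    have "f i^2 \<le> 1" if "i < n" for i
    proof -
      have "f i * f i \<le> (\<Sum>k<n. f k * f k)"
        by (rule member_le_sum) (use that in auto)
      then show ?thesis unfolding sum1 power2_eq_square .
    qed
    then have "f \<in> S"
      using sum1 unfolding S_def box_def f_def by (auto simp: PiE_iff abs_square_le_1 abs_le_iff)
    moreover have "vec n f = u" using u unfolding f_def by auto
    ultimately show "u \<bullet> (M *\<^sub>v u) \<le> vec n f0 \<bullet> (M *\<^sub>v vec n f0)"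
      using max quadratic_form_vec_eq[OF M] unfolding Q_def by metis
  qed
qed

lemma quadratic_form_le_rayleigh_max:
  fixes M :: "real mat"
  assumes M: "M \<in> carrier_mat n n" and max: "\<And>u. u \<in> carrier_vec n \<Longrightarrow> u \<bullet> u = 1 \<Longrightarrow> u \<bullet> (M *\<^sub>v u) \<le> lam"
    and u: "u \<in> carrier_vec n"
  shows "u \<bullet> (M *\<^sub>v u) \<le> lam * (u \<bullet> u)"
proof (cases "u = 0\<^sub>v n")
  case True
  then show ?thesis using M by simp
next
  case False
  define s where "s = sqrt (u \<bullet> u)"
  have pos: "0 < u \<bullet> u"
    using False scalar_prod_self_nonneg[of u] scalar_prod_self_eq_0_iff[OF u] by linarith
  then have s: "0 < s" "s * s = u \<bullet> u" unfolding s_def by simp_all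
  have Mu: "M *\<^sub>v u \<in> carrier_vec n" using M u by simp
  have unit: "((1/s) \<cdot>\<^sub>v u) \<bullet> ((1/s) \<cdot>\<^sub>v u) = 1"
    using u s by (simp flip: s(2))
  have "((1/s) \<cdot>\<^sub>v u) \<bullet> (M *\<^sub>v ((1/s) \<cdot>\<^sub>v u)) = (u \<bullet> (M *\<^sub>v u)) / (s * s)"
    using u Mu by (simp add: mult_mat_vec[OF M u])
  with max[OF _ unit] u have "(u \<bullet> (M *\<^sub>v u)) / (s * s) \<le> lam" by simp
  then show ?thesis using pos unfolding s(2) by (simp add: pos_divide_le_eq mult.commute)
qed

lemma symmetric_mat_rayleigh_max_eigenvalue:
  fixes M :: "real mat"
  assumes M: "M \<in> carrier_mat n n" and sym: "transpose_mat M = M" and n: "0 < n"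
  obtains lam where "eigenvalue M lam" "\<And>u. u \<in> carrier_vec n \<Longrightarrow> u \<bullet> (M *\<^sub>v u) \<le> lam * (u \<bullet> u)"
proof -
  obtain x where x: "x \<in> carrier_vec n" and xx: "x \<bullet> x = 1"
    and max: "\<And>u. u \<in> carrier_vec n \<Longrightarrow> u \<bullet> u = 1 \<Longrightarrow> u \<bullet> (M *\<^sub>v u) \<le> x \<bullet> (M *\<^sub>v x)"
    using quadratic_form_attains_max_on_sphere[OF M n] by blast
  define lam where "lam = x \<bullet> (M *\<^sub>v x)"
  have ray: "u \<bullet> (M *\<^sub>v u) \<le> lam * (u \<bullet> u)" if "u \<in> carrier_vec n" for u
    using quadratic_form_le_rayleigh_max[OF M max that] unfolding lam_def .
  define S where "S = lam \<cdot>\<^sub>m 1\<^sub>m n - M"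
  have S: "S \<in> carrier_mat n n" unfolding S_def using M by auto
  have S_sym: "transpose_mat S = S" unfolding S_def using M sym
    by (simp add: transpose_minus[of _ n n]) (rule eq_matI; auto)
  have S_form: "u \<bullet> (S *\<^sub>v u) = lam * (u \<bullet> u) - u \<bullet> (M *\<^sub>v u)" if u: "u \<in> carrier_vec n" for u
    unfolding S_def using M u
    by (simp add: minus_mult_distrib_mat_vec[of _ n n] smult_mat_mult_vec[of _ n n]
        scalar_prod_minus_distrib[of _ n])
  have "S *\<^sub>v x = lam \<cdot>\<^sub>v x - M *\<^sub>v x"
    unfolding S_def using M x by (simp add: minus_mult_distrib_mat_vec[of _ n n] smult_mat_mult_vec[of _ n n])
  moreover have "S *\<^sub>v x = 0\<^sub>v n"
    by (rule psd_quadratic_form_eq_0_imp_mult_eq_0[OF S S_sym _ x])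
       (use ray S_form x xx in \<open>simp_all add: lam_def\<close>)
  ultimately have diff: "lam \<cdot>\<^sub>v x - M *\<^sub>v x = 0\<^sub>v n" by simp
  have "M *\<^sub>v x = lam \<cdot>\<^sub>v x"
  proof (rule eq_vecI)
    fix i assume "i < dim_vec (lam \<cdot>\<^sub>v x)"
    with x have "i < n" by simp
    then show "(M *\<^sub>v x) $ i = (lam \<cdot>\<^sub>v x) $ i"
      using arg_cong[OF diff, of "\<lambda>v. v $ i"] M x by simp
  qed (use M x in simp)
  moreover have "x \<noteq> 0\<^sub>v n" using xx by auto
  ultimately have "eigenvalue M lam"
    unfolding eigenvalue_def eigenvector_def using x M by auto
  then show thesis using ray by (rule that)
qed

lemma finite_eigenvalues:
  fixes M :: "real mat"
  assumes M: "M \<in> carrier_mat n n"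
  shows "finite {k. eigenvalue M k}"
proof -
  have "char_poly M \<noteq> 0" using degree_monic_char_poly[OF M] by auto
  then have "finite {k. poly (char_poly M) k = 0}" by (rule poly_roots_finite)
  then show ?thesis using eigenvalue_root_char_poly[OF M] by simp
qed

lemma quadratic_form_le_lambda_max:
  fixes M :: "real mat"
  assumes M: "M \<in> carrier_mat n n" and sym: "transpose_mat M = M" and n: "0 < n"
    and u: "u \<in> carrier_vec n"
  shows "u \<bullet> (M *\<^sub>v u) \<le> lambda_max M * (u \<bullet> u)"
proof -
  obtain lam where lam: "eigenvalue M lam"
    and ray: "\<And>u. u \<in> carrier_vec n \<Longrightarrow> u \<bullet> (M *\<^sub>v u) \<le> lam * (u \<bullet> u)"
    using symmetric_mat_rayleigh_max_eigenvalue[OF M sym n] by blast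
  have "lam \<le> lambda_max M"
    unfolding lambda_max_def using finite_eigenvalues[OF M] lam by simp
  then have "lam * (u \<bullet> u) \<le> lambda_max M * (u \<bullet> u)"
    by (rule mult_right_mono) (rule scalar_prod_self_nonneg)
  with ray[OF u] show ?thesis by linarith
qed

section \<open>Abstract two-grid estimates\<close>

lemma minv_right_inverse:
  fixes B :: "real mat"
  assumes B: "B \<in> carrier_mat k k"
    and inj: "\<And>z. z \<in> carrier_vec k \<Longrightarrow> B *\<^sub>v z = 0\<^sub>v k \<Longrightarrow> z = 0\<^sub>v k"
  shows "minv B \<in> carrier_mat k k" and "B * minv B = 1\<^sub>m k"
proof -
  have "det B \<noteq> 0" using det_0_iff_vec_prod_zero_field[OF B] inj by blast
  then have "B \<in> Units (ring_mat TYPE(real) k ())" by (rule det_non_zero_imp_unit[OF B])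
  then have "\<exists>C. C \<in> carrier_mat (dim_row B) (dim_row B) \<and> B * C = 1\<^sub>m (dim_row B) \<and> C * B = 1\<^sub>m (dim_row B)"
    using B unfolding Units_def ring_mat_def by auto
  from someI_ex[OF this] show "minv B \<in> carrier_mat k k" and "B * minv B = 1\<^sub>m k"
    unfolding minv_def using B by auto
qed

lemma richardson_energy_estimate:
  fixes A :: "real mat"
  assumes A: "A \<in> carrier_mat n n" and sym: "transpose_mat A = A"
    and ray: "\<And>u. u \<in> carrier_vec n \<Longrightarrow> u \<bullet> (A *\<^sub>v u) \<le> \<eta>0 * d * (u \<bullet> u)"
    and d: "0 < d" and eta: "\<eta> \<le> \<omega> * (2 - \<omega> * \<eta>0)"
    and v: "v \<in> carrier_vec n"
  shows "((1\<^sub>m n - (\<omega>/d) \<cdot>\<^sub>m A) *\<^sub>v v) \<bullet> (A *\<^sub>v ((1\<^sub>m n - (\<omega>/d) \<cdot>\<^sub>m A) *\<^sub>v v))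
     \<le> v \<bullet> (A *\<^sub>v v) - \<eta> / d * ((A *\<^sub>v v) \<bullet> (A *\<^sub>v v))"
proof -
  let ?r = "A *\<^sub>v v"
  have r: "?r \<in> carrier_vec n" using A v by simp
  have K: "(1\<^sub>m n - (\<omega>/d) \<cdot>\<^sub>m A) *\<^sub>v v = v - (\<omega>/d) \<cdot>\<^sub>v ?r"
    using A v by (simp add: minus_mult_distrib_mat_vec[of _ n n] smult_mat_mult_vec[of _ n n])
  have "(v - (\<omega>/d) \<cdot>\<^sub>v ?r) \<bullet> (A *\<^sub>v (v - (\<omega>/d) \<cdot>\<^sub>v ?r))
     = v \<bullet> ?r - 2 * (\<omega>/d) * (?r \<bullet> ?r) + (\<omega>/d)^2 * (?r \<bullet> (A *\<^sub>v ?r))"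
    by (rule quadratic_form_diff[OF A sym v r])
  moreover have "(\<omega>/d)^2 * (?r \<bullet> (A *\<^sub>v ?r)) \<le> \<omega> * \<omega> * \<eta>0 / d * (?r \<bullet> ?r)"
  proof -
    have "(\<omega>/d)^2 * (?r \<bullet> (A *\<^sub>v ?r)) \<le> (\<omega>/d)^2 * (\<eta>0 * d * (?r \<bullet> ?r))"
      using ray[OF r] by (rule mult_left_mono) simp
    also have "\<dots> = \<omega> * \<omega> * \<eta>0 / d * (?r \<bullet> ?r)"
      using d by (simp add: power2_eq_square field_simps)
    finally show ?thesis .
  qed
  moreover have "\<eta> / d * (?r \<bullet> ?r) \<le> 2 * (\<omega>/d) * (?r \<bullet> ?r) - \<omega> * \<omega> * \<eta>0 / d * (?r \<bullet> ?r)"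
  proof -
    have "\<eta> / d * (?r \<bullet> ?r) \<le> \<omega> * (2 - \<omega> * \<eta>0) / d * (?r \<bullet> ?r)"
      using eta d scalar_prod_self_nonneg[of ?r] by (intro mult_right_mono divide_right_mono) auto
    then show ?thesis using d by (simp add: field_simps)
  qed
  ultimately show ?thesis unfolding K by linarith
qed

lemma damping_factor_le_1:
  fixes \<omega> \<eta>0 :: real
  assumes "1 \<le> \<eta>0"
  shows "\<omega> * (2 - \<omega> * \<eta>0) \<le> 1"
proof (cases "0 \<le> \<omega> * (2 - \<omega> * \<eta>0)")
  case True
  have "\<eta>0 * (\<omega> * (2 - \<omega> * \<eta>0)) = 1 - (1 - \<omega> * \<eta>0)^2" by (simp add: power2_eq_square algebra_simps)
  then have "\<eta>0 * (\<omega> * (2 - \<omega> * \<eta>0)) \<le> 1" by simp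
  moreover have "\<omega> * (2 - \<omega> * \<eta>0) \<le> \<eta>0 * (\<omega> * (2 - \<omega> * \<eta>0))"
    using mult_right_mono[OF assms True] by simp
  ultimately show ?thesis by linarith
qed simp

lemma coarse_correction_mult_vec:
  fixes A R P G :: "real mat"
  assumes A: "A \<in> carrier_mat n n" and R: "R \<in> carrier_mat nc n" and P: "P \<in> carrier_mat n nc"
    and G: "G \<in> carrier_mat nc nc" and v: "v \<in> carrier_vec n"
  shows "(1\<^sub>m n - P * G * R * A) *\<^sub>v v = v - P *\<^sub>v (G *\<^sub>v (R *\<^sub>v (A *\<^sub>v v)))"
proof -
  let ?y = "R *\<^sub>v (A *\<^sub>v v)"
  have y: "?y \<in> carrier_vec nc" using R A v by simp
  have PG: "P * G \<in> carrier_mat n nc" and PGR: "P * G * R \<in> carrier_mat n n" using P G R by auto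
  have "(1\<^sub>m n - P * G * R * A) *\<^sub>v v = v - (P * G * R * A) *\<^sub>v v"
    using minus_mult_distrib_mat_vec[OF one_carrier_mat _ v, of "P * G * R * A"] PGR A v by simp
  also have "(P * G * R * A) *\<^sub>v v = (P * G * R) *\<^sub>v (A *\<^sub>v v)" by (rule assoc_mult_mat_vec[OF PGR A v])
  also have "\<dots> = (P * G) *\<^sub>v ?y" by (rule assoc_mult_mat_vec[OF PG R]) (use A v in simp)
  also have "\<dots> = P *\<^sub>v (G *\<^sub>v ?y)" by (rule assoc_mult_mat_vec[OF P G y])
  finally show ?thesis .
qed

lemma coarse_correction_galerkin_orthogonal:
  fixes A R P G :: "real mat"
  assumes A: "A \<in> carrier_mat n n" and R: "R \<in> carrier_mat nc n" and P: "P \<in> carrier_mat n nc"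
    and G: "G \<in> carrier_mat nc nc" and inv: "(R * A * P) * G = 1\<^sub>m nc"
    and v: "v \<in> carrier_vec n"
  shows "R *\<^sub>v (A *\<^sub>v ((1\<^sub>m n - P * G * R * A) *\<^sub>v v)) = 0\<^sub>v nc"
proof -
  let ?y = "R *\<^sub>v (A *\<^sub>v v)"
  have y: "?y \<in> carrier_vec nc" using R A v by simp
  have "(1\<^sub>m n - P * G * R * A) *\<^sub>v v = v - P *\<^sub>v (G *\<^sub>v ?y)"
    by (rule coarse_correction_mult_vec[OF A R P G v])
  moreover have "R *\<^sub>v (A *\<^sub>v (P *\<^sub>v (G *\<^sub>v ?y))) = ?y"
  proof -
    have RA: "R * A \<in> carrier_mat nc n" and RAP: "R * A * P \<in> carrier_mat nc nc" using R A P by auto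
    have Gy: "G *\<^sub>v ?y \<in> carrier_vec nc" using G y by simp
    have "?y = ((R * A * P) * G) *\<^sub>v ?y" using inv y by simp
    also have "\<dots> = (R * A * P) *\<^sub>v (G *\<^sub>v ?y)" by (rule assoc_mult_mat_vec[OF RAP G y])
    also have "\<dots> = (R * A) *\<^sub>v (P *\<^sub>v (G *\<^sub>v ?y))" by (rule assoc_mult_mat_vec[OF RA P Gy])
    also have "\<dots> = R *\<^sub>v (A *\<^sub>v (P *\<^sub>v (G *\<^sub>v ?y)))"
      by (rule assoc_mult_mat_vec[OF R A]) (use P Gy in simp)
    finally show ?thesis by simp
  qed
  ultimately show ?thesis
    using A R P G v by (simp add: mult_minus_distrib_mat_vec[of _ n n] mult_minus_distrib_mat_vec[of _ nc n])
qed

lemma coarse_correction_A_orthogonal: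
  fixes A R P G :: "real mat"
  assumes A: "A \<in> carrier_mat n n" and R: "R \<in> carrier_mat nc n" and PR: "P = s \<cdot>\<^sub>m transpose_mat R"
    and G: "G \<in> carrier_mat nc nc" and inv: "(R * A * P) * G = 1\<^sub>m nc"
    and v: "v \<in> carrier_vec n" and z: "z \<in> carrier_vec nc"
  shows "(P *\<^sub>v z) \<bullet> (A *\<^sub>v ((1\<^sub>m n - P * G * R * A) *\<^sub>v v)) = 0"
proof -
  let ?w = "(1\<^sub>m n - P * G * R * A) *\<^sub>v v"
  have P: "P \<in> carrier_mat n nc" using R PR by simp
  have Aw: "A *\<^sub>v ?w \<in> carrier_vec n"
    unfolding coarse_correction_mult_vec[OF A R P G v] using A P G R v by simp
  have RTz: "transpose_mat R *\<^sub>v z \<in> carrier_vec n" using R z by simp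
  have "P *\<^sub>v z = s \<cdot>\<^sub>v (transpose_mat R *\<^sub>v z)"
    unfolding PR using R z by (simp add: smult_mat_mult_vec[of _ n nc])
  then have "(P *\<^sub>v z) \<bullet> (A *\<^sub>v ?w) = s * ((transpose_mat R *\<^sub>v z) \<bullet> (A *\<^sub>v ?w))"
    using smult_scalar_prod_distrib[OF RTz Aw] by simp
  also have "(transpose_mat R *\<^sub>v z) \<bullet> (A *\<^sub>v ?w) = z \<bullet> (R *\<^sub>v (A *\<^sub>v ?w))"
    by (rule transpose_vec_mult_scalar[OF R Aw z])
  also have "R *\<^sub>v (A *\<^sub>v ?w) = 0\<^sub>v nc"
    by (rule coarse_correction_galerkin_orthogonal[OF A R P G inv v])
  finally show ?thesis using z by simp
qed

lemma coarse_correction_energy_le: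
  fixes A R P G :: "real mat"
  assumes A: "A \<in> carrier_mat n n" and sym: "transpose_mat A = A"
    and psd: "\<And>u. u \<in> carrier_vec n \<Longrightarrow> 0 \<le> u \<bullet> (A *\<^sub>v u)"
    and R: "R \<in> carrier_mat nc n" and PR: "P = s \<cdot>\<^sub>m transpose_mat R"
    and G: "G \<in> carrier_mat nc nc" and inv: "(R * A * P) * G = 1\<^sub>m nc"
    and v: "v \<in> carrier_vec n"
  shows "((1\<^sub>m n - P * G * R * A) *\<^sub>v v) \<bullet> (A *\<^sub>v ((1\<^sub>m n - P * G * R * A) *\<^sub>v v))
    \<le> v \<bullet> (A *\<^sub>v v)"
proof -
  have P: "P \<in> carrier_mat n nc" using R PR by simp
  define z where "z = G *\<^sub>v (R *\<^sub>v (A *\<^sub>v v))"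
  have z: "z \<in> carrier_vec nc" unfolding z_def using G R A v by simp
  let ?p = "P *\<^sub>v z"
  have p: "?p \<in> carrier_vec n" using P z by simp
  have w: "(1\<^sub>m n - P * G * R * A) *\<^sub>v v = v - 1 \<cdot>\<^sub>v ?p"
    using coarse_correction_mult_vec[OF A R P G v] unfolding z_def by simp
  have "?p \<bullet> (A *\<^sub>v (v - ?p)) = 0"
    using coarse_correction_A_orthogonal[OF A R PR G inv v z] w by simp
  then have "?p \<bullet> (A *\<^sub>v v) = ?p \<bullet> (A *\<^sub>v ?p)"
    using A v p by (simp add: mult_minus_distrib_mat_vec[of _ n n] scalar_prod_minus_distrib[of _ n])
  then show ?thesis
    unfolding w quadratic_form_diff[OF A sym v p] using psd[OF p] by simp
qed

lemma energy_le_residual_if_approximable: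
  fixes A P :: "real mat"
  assumes A: "A \<in> carrier_mat n n" and P: "P \<in> carrier_mat n nc" and w: "w \<in> carrier_vec n"
    and orth: "\<And>z. z \<in> carrier_vec nc \<Longrightarrow> (P *\<^sub>v z) \<bullet> (A *\<^sub>v w) = 0"
    and z: "z \<in> carrier_vec nc" and approx: "d * ((w - P *\<^sub>v z) \<bullet> (w - P *\<^sub>v z)) \<le> C * (w \<bullet> (A *\<^sub>v w))"
    and d: "0 < d" and C: "0 < C"
  shows "d * (w \<bullet> (A *\<^sub>v w)) \<le> C * ((A *\<^sub>v w) \<bullet> (A *\<^sub>v w))"
proof -
  define r where "r = A *\<^sub>v w"
  define e where "e = w - P *\<^sub>v z"
  define t where "t = C / d"
  have r: "r \<in> carrier_vec n" and e: "e \<in> carrier_vec n"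
    unfolding r_def e_def using A P w z by auto
  have Q: "w \<bullet> (A *\<^sub>v w) = r \<bullet> e"
    using orth[OF z] comm_scalar_prod[OF r w] comm_scalar_prod[of "P *\<^sub>v z" n r] P z r w
    unfolding r_def e_def by (simp add: scalar_prod_minus_distrib[of _ n])
  \<comment> \<open>Cauchy-Schwarz for \<open>r \<bullet> e\<close>, in the weighted form \<open>2 t (r \<bullet> e) \<le> t\<^sup>2 |r|\<^sup>2 + |e|\<^sup>2\<close>\<close>
  have "0 \<le> (t \<cdot>\<^sub>v r - e) \<bullet> (t \<cdot>\<^sub>v r - e)" by (rule scalar_prod_self_nonneg)
  also have "\<dots> = t * t * (r \<bullet> r) - 2 * t * (r \<bullet> e) + e \<bullet> e"
    using r e by (simp add: minus_scalar_prod_distrib[of _ n] scalar_prod_minus_distrib[of _ n]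
        comm_scalar_prod[of e n r] algebra_simps)
  finally have "2 * t * (r \<bullet> e) \<le> t * t * (r \<bullet> r) + e \<bullet> e" by simp
  moreover have "e \<bullet> e \<le> t * (r \<bullet> e)"
    using approx d unfolding Q e_def[symmetric] t_def by (simp add: field_simps)
  ultimately have "t * (r \<bullet> e) \<le> t * (t * (r \<bullet> r))" by (simp add: algebra_simps)
  moreover have "0 < t" using C d unfolding t_def by simp
  ultimately have "r \<bullet> e \<le> t * (r \<bullet> r)" by (rule mult_left_le_imp_le)
  then show ?thesis using d unfolding Q t_def r_def by (simp add: field_simps)
qed

lemma two_grid_energy_contraction:
  fixes A R P G :: "real mat"
  assumes A: "A \<in> carrier_mat n n" and sym: "transpose_mat A = A"
    and psd: "\<And>u. u \<in> carrier_vec n \<Longrightarrow> 0 \<le> u \<bullet> (A *\<^sub>v u)"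
    and R: "R \<in> carrier_mat nc n" and PR: "P = s \<cdot>\<^sub>m transpose_mat R"
    and G: "G \<in> carrier_mat nc nc" and inv: "(R * A * P) * G = 1\<^sub>m nc"
    and approx: "\<And>w. w \<in> carrier_vec n \<Longrightarrow>
      \<exists>z\<in>carrier_vec nc. d * ((w - P *\<^sub>v z) \<bullet> (w - P *\<^sub>v z)) \<le> C * (w \<bullet> (A *\<^sub>v w))"
    and ray: "\<And>u. u \<in> carrier_vec n \<Longrightarrow> u \<bullet> (A *\<^sub>v u) \<le> \<eta>0 * d * (u \<bullet> u)"
    and d: "0 < d" and C: "0 < C" and eta: "\<eta> \<le> \<omega> * (2 - \<omega> * \<eta>0)"
    and eta_nonneg: "0 \<le> \<eta>" and eta_le: "\<eta> \<le> C"
    and v: "v \<in> carrier_vec n"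
  shows "(((1\<^sub>m n - (\<omega>/d) \<cdot>\<^sub>m A) * (1\<^sub>m n - P * G * R * A)) *\<^sub>v v) \<bullet>
           (A *\<^sub>v (((1\<^sub>m n - (\<omega>/d) \<cdot>\<^sub>m A) * (1\<^sub>m n - P * G * R * A)) *\<^sub>v v))
     \<le> (1 - \<eta> / C) * (v \<bullet> (A *\<^sub>v v))"
proof -
  have P: "P \<in> carrier_mat n nc" using R PR by simp
  define w where "w = (1\<^sub>m n - P * G * R * A) *\<^sub>v v"
  have w: "w \<in> carrier_vec n"
    unfolding w_def coarse_correction_mult_vec[OF A R P G v] using A R P G v by simp
  obtain z where z: "z \<in> carrier_vec nc"
    and dz: "d * ((w - P *\<^sub>v z) \<bullet> (w - P *\<^sub>v z)) \<le> C * (w \<bullet> (A *\<^sub>v w))"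
    using approx[OF w] by blast
  have "d * (w \<bullet> (A *\<^sub>v w)) \<le> C * ((A *\<^sub>v w) \<bullet> (A *\<^sub>v w))"
    using energy_le_residual_if_approximable[OF A P w _ z dz d C]
      coarse_correction_A_orthogonal[OF A R PR G inv v] unfolding w_def by blast
  then have "\<eta> / (C * d) * (d * (w \<bullet> (A *\<^sub>v w))) \<le> \<eta> / (C * d) * (C * ((A *\<^sub>v w) \<bullet> (A *\<^sub>v w)))"
    by (rule mult_left_mono) (use d C eta_nonneg in simp)
  then have "\<eta> / C * (w \<bullet> (A *\<^sub>v w)) \<le> \<eta> / d * ((A *\<^sub>v w) \<bullet> (A *\<^sub>v w))"
    using d C by (simp add: field_simps)
  moreover have "((1\<^sub>m n - (\<omega>/d) \<cdot>\<^sub>m A) *\<^sub>v w) \<bullet> (A *\<^sub>v ((1\<^sub>m n - (\<omega>/d) \<cdot>\<^sub>m A) *\<^sub>v w))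
     \<le> w \<bullet> (A *\<^sub>v w) - \<eta> / d * ((A *\<^sub>v w) \<bullet> (A *\<^sub>v w))"
    by (rule richardson_energy_estimate[OF A sym ray d eta w])
  moreover have "w \<bullet> (A *\<^sub>v w) \<le> v \<bullet> (A *\<^sub>v v)"
    unfolding w_def using coarse_correction_energy_le[OF A sym psd R PR G inv v] by simp
  then have "(1 - \<eta> / C) * (w \<bullet> (A *\<^sub>v w)) \<le> (1 - \<eta> / C) * (v \<bullet> (A *\<^sub>v v))"
    by (rule mult_left_mono) (use eta_le C in simp)
  moreover have "((1\<^sub>m n - (\<omega>/d) \<cdot>\<^sub>m A) * (1\<^sub>m n - P * G * R * A)) *\<^sub>v v = (1\<^sub>m n - (\<omega>/d) \<cdot>\<^sub>m A) *\<^sub>v w"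
    unfolding w_def by (rule assoc_mult_mat_vec) (use A P G R v in auto)
  ultimately show ?thesis by (simp only:) (simp add: left_diff_distrib)
qed

lemma vnormM_square:
  "0 \<le> v \<bullet> (M *\<^sub>v v) \<Longrightarrow> (vnormM M v)^2 = v \<bullet> (M *\<^sub>v v)"
  unfolding vnormM_def by simp

lemma opnormM_le_sqrt:
  fixes A X :: "real mat"
  assumes X: "X \<in> carrier_mat n n" and n: "0 < n"
    and pd: "\<And>v. v \<in> carrier_vec n \<Longrightarrow> v \<noteq> 0\<^sub>v n \<Longrightarrow> 0 < v \<bullet> (A *\<^sub>v v)"
    and bound: "\<And>v. v \<in> carrier_vec n \<Longrightarrow> (X *\<^sub>v v) \<bullet> (A *\<^sub>v (X *\<^sub>v v)) \<le> \<kappa> * (v \<bullet> (A *\<^sub>v v))"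
  shows "opnormM A X \<le> sqrt \<kappa>"
  unfolding opnormM_def
proof (rule cSup_least)
  have "(unit_vec n 0 :: real vec) $ 0 \<noteq> 0\<^sub>v n $ 0" using n by simp
  then have "unit_vec n 0 \<in> carrier_vec (dim_col X) \<and> unit_vec n 0 \<noteq> (0\<^sub>v (dim_col X) :: real vec)"
    using X by auto
  then show "{vnormM A (X *\<^sub>v v) / vnormM A v |v. v \<in> carrier_vec (dim_col X) \<and> v \<noteq> 0\<^sub>v (dim_col X)} \<noteq> {}"
    by blast
next
  fix r assume "r \<in> {vnormM A (X *\<^sub>v v) / vnormM A v |v. v \<in> carrier_vec (dim_col X) \<and> v \<noteq> 0\<^sub>v (dim_col X)}"
  then obtain v where v: "v \<in> carrier_vec n" and nz: "v \<noteq> 0\<^sub>v n"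
    and r: "r = vnormM A (X *\<^sub>v v) / vnormM A v" using X by auto
  have "vnormM A (X *\<^sub>v v) \<le> sqrt (\<kappa> * (v \<bullet> (A *\<^sub>v v)))"
    unfolding vnormM_def using bound[OF v] by (rule real_sqrt_le_mono)
  also have "\<dots> = sqrt \<kappa> * vnormM A v" unfolding vnormM_def by (simp add: real_sqrt_mult)
  finally show "r \<le> sqrt \<kappa>"
    using pd[OF v nz] unfolding r vnormM_def by (simp add: divide_le_eq)
qed

section \<open>The stiffness matrix \<open>B\<^sub>h\<close>\<close>

lemma sum_lessThan_double:
  fixes g :: "nat \<Rightarrow> 'a::comm_monoid_add"
  shows "(\<Sum>k<2*m. g k) = (\<Sum>i<m. g (2*i) + g (2*i+1))"
  by (induction m) (simp_all add: numeral_eq_Suc add.assoc)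

lemma sum_lessThan_shift_vanishing_ends:
  fixes h :: "nat \<Rightarrow> 'a::comm_monoid_add"
  assumes "h 0 = 0" and "h m = 0"
  shows "(\<Sum>i<m. h (Suc i)) = (\<Sum>i<m. h i)"
  using sum.lessThan_Suc_shift[of h m] sum.lessThan_Suc[of h m] assms by (simp add: add.commute)

lemma Bmat_carrier: "Bmat N \<in> carrier_mat (N-1) (N-1)"
  unfolding Bmat_def by simp

text \<open>Node values of a grid vector with \<open>N - 1\<close> unknowns, numbered \<open>0, ..., N\<close> as in the paper,
  including the zero exterior values at the boundary nodes \<open>0\<close> and \<open>N\<close>.\<close>
definition nodal :: "nat \<Rightarrow> real vec \<Rightarrow> nat \<Rightarrow> real" where
  "nodal N v k = (if 1 \<le> k \<and> k < N then v $ (k - 1) else 0)"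

lemma Bmat_mult_vec_nth:
  fixes v :: "real vec"
  assumes v: "v \<in> carrier_vec (N-1)" and i: "i < N - 1"
  shows "(Bmat N *\<^sub>v v) $ i
    = real N / 6 * (4 * nodal N v (i+1) + nodal N v i + nodal N v (i+2)) - (\<Sum>k<N. nodal N v k)"
proof -
  let ?n = "N - 1" and ?x = "nodal N v"
  have "(Bmat N *\<^sub>v v) $ i = (\<Sum>j<?n. Bmat N $$ (i,j) * v $ j)"
    using v i Bmat_carrier[of N] by (simp add: mult_mat_vec_def scalar_prod_def row_def atLeast0LessThan)
  also have "\<dots> = real N / 6 * ((\<Sum>j<?n. if j = i then 4 * v $ j else 0)
        + (\<Sum>j<?n. if i = j + 1 then v $ j else 0) + (\<Sum>j<?n. if j = i + 1 then v $ j else 0))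
      - (\<Sum>j<?n. v $ j)"
    unfolding sum_distrib_left distrib_left sum_subtractf[symmetric] sum.distrib[symmetric]
    by (rule sum.cong) (use i in \<open>auto simp: Bmat_def algebra_simps\<close>)
  also have "(\<Sum>j<?n. if j = i then 4 * v $ j else 0) = 4 * ?x (i+1)"
    using i unfolding nodal_def by simp
  also have "(\<Sum>j<?n. if i = j + 1 then v $ j else 0) = ?x i"
    using i unfolding nodal_def by (cases i) auto
  also have "(\<Sum>j<?n. if j = i + 1 then v $ j else 0) = ?x (i+2)"
    unfolding nodal_def by auto
  also have "(\<Sum>j<?n. v $ j) = (\<Sum>k<N. ?x k)"
  proof -
    have "(\<Sum>k<N. ?x k) = (\<Sum>k<Suc ?n. ?x k)" using i by simp
    also have "\<dots> = ?x 0 + (\<Sum>j<?n. ?x (Suc j))" by (rule sum.lessThan_Suc_shift)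
    also have "\<dots> = (\<Sum>j<?n. v $ j)" by (auto simp: nodal_def intro!: sum.cong)
    finally show ?thesis by simp
  qed
  finally show ?thesis .
qed

lemma Bmat_quadratic_form:
  fixes v :: "real vec"
  assumes v: "v \<in> carrier_vec (N-1)" and N: "1 \<le> N"
  defines "x \<equiv> nodal N v"
  shows "v \<bullet> (Bmat N *\<^sub>v v)
    = real N / 6 * (\<Sum>k<N. x k * (4 * x k + x (k-1) + x (k+1))) - (\<Sum>k<N. x k)^2"
proof -
  let ?S = "\<Sum>k<N. x k"
  have "v \<bullet> (Bmat N *\<^sub>v v) = (\<Sum>i<N-1. v $ i * (Bmat N *\<^sub>v v) $ i)"
    using v Bmat_carrier[of N] by (simp add: scalar_prod_def atLeast0LessThan)
  also have "\<dots> = (\<Sum>i<N-1. x (Suc i) * (real N / 6 * (4 * x (Suc i) + x (Suc i - 1) + x (Suc i + 1)) - ?S))"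
    by (rule sum.cong) (auto simp: Bmat_mult_vec_nth[OF v] x_def nodal_def)
  also have "\<dots> = (\<Sum>k<N. x k * (real N / 6 * (4 * x k + x (k - 1) + x (k + 1)) - ?S))"
    using sum.lessThan_Suc_shift[of "\<lambda>k. x k * (real N / 6 * (4 * x k + x (k - 1) + x (k + 1)) - ?S)" "N-1"] N
    by (simp add: x_def nodal_def)
  also have "\<dots> = real N / 6 * (\<Sum>k<N. x k * (4 * x k + x (k-1) + x (k+1))) - ?S * ?S"
    by (simp add: sum_subtractf sum_distrib_left sum_distrib_right algebra_simps)
  finally show ?thesis by (simp add: power2_eq_square)
qed

definition interp_defect :: "(nat \<Rightarrow> real) \<Rightarrow> nat \<Rightarrow> real" where
  "interp_defect x i = x (2*i+1) - (x (2*i) + x (2*i+2)) / 2"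

definition cell_half_diff :: "(nat \<Rightarrow> real) \<Rightarrow> nat \<Rightarrow> real" where
  "cell_half_diff x i = (x (2*i+2) - x (2*i)) / 2"

lemma stencil_sums_by_cells:
  fixes x :: "nat \<Rightarrow> real"
  assumes x0: "x 0 = 0" and xm: "x (2*m) = 0"
  shows "(\<Sum>k<2*m. x k * (4 * x k + x (k-1) + x (k+1)))
       = (\<Sum>i<m. 2 * x (2*i)^2 + 2 * x (2*i+2)^2 + 4 * x (2*i+1)^2
                 + 2 * x (2*i) * x (2*i+1) + 2 * x (2*i+2) * x (2*i+1))"
    and "(\<Sum>k<2*m. x k) = (\<Sum>i<m. x (2*i+1) + (x (2*i) + x (2*i+2)) / 2)"
proof -
  have sh1: "(\<Sum>i<m. x (2*i+2)^2) = (\<Sum>i<m. x (2*i)^2)"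
    using sum_lessThan_shift_vanishing_ends[of "\<lambda>i. x (2*i)^2" m] x0 xm by simp
  have sh2: "(\<Sum>i<m. x (2*i+2) * x (2*i+1)) = (\<Sum>i<m. x (2*i) * x (2*i-1))"
    using sum_lessThan_shift_vanishing_ends[of "\<lambda>i. x (2*i) * x (2*i-1)" m] x0 xm by simp
  have sh3: "(\<Sum>i<m. x (2*i+2)) = (\<Sum>i<m. x (2*i))"
    using sum_lessThan_shift_vanishing_ends[of "\<lambda>i. x (2*i)" m] x0 xm by simp
  have "(\<Sum>k<2*m. x k * (4 * x k + x (k-1) + x (k+1)))
      = (\<Sum>i<m. x (2*i) * (4 * x (2*i) + x (2*i-1) + x (2*i+1))
               + x (2*i+1) * (4 * x (2*i+1) + x (2*i) + x (2*i+2)))"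
    by (subst sum_lessThan_double) simp
  also have "\<dots> = 4 * (\<Sum>i<m. x (2*i)^2) + (\<Sum>i<m. x (2*i) * x (2*i-1))
      + (\<Sum>i<m. 4 * x (2*i+1)^2 + 2 * x (2*i) * x (2*i+1) + x (2*i+2) * x (2*i+1))"
    by (simp add: sum.distrib sum_distrib_left power2_eq_square algebra_simps)
  also have "\<dots> = 2 * (\<Sum>i<m. x (2*i)^2) + 2 * (\<Sum>i<m. x (2*i+2)^2) + (\<Sum>i<m. x (2*i+2) * x (2*i+1))
      + (\<Sum>i<m. 4 * x (2*i+1)^2 + 2 * x (2*i) * x (2*i+1) + x (2*i+2) * x (2*i+1))"
    unfolding sh1 sh2 by simp
  also have "\<dots> = (\<Sum>i<m. 2 * x (2*i)^2 + 2 * x (2*i+2)^2 + 4 * x (2*i+1)^2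
                 + 2 * x (2*i) * x (2*i+1) + 2 * x (2*i+2) * x (2*i+1))"
    by (simp add: sum.distrib sum_distrib_left algebra_simps)
  finally show "(\<Sum>k<2*m. x k * (4 * x k + x (k-1) + x (k+1)))
       = (\<Sum>i<m. 2 * x (2*i)^2 + 2 * x (2*i+2)^2 + 4 * x (2*i+1)^2
                 + 2 * x (2*i) * x (2*i+1) + 2 * x (2*i+2) * x (2*i+1))" .
  have "(\<Sum>k<2*m. x k) = (\<Sum>i<m. x (2*i) + x (2*i+1))" by (rule sum_lessThan_double)
  also have "\<dots> = (\<Sum>i<m. x (2*i))/2 + (\<Sum>i<m. x (2*i+2))/2 + (\<Sum>i<m. x (2*i+1))"
    unfolding sh3 by (simp add: sum.distrib)
  also have "\<dots> = (\<Sum>i<m. x (2*i+1) + (x (2*i) + x (2*i+2)) / 2)"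
    by (simp add: sum.distrib sum_divide_distrib add_divide_distrib)
  finally show "(\<Sum>k<2*m. x k) = (\<Sum>i<m. x (2*i+1) + (x (2*i) + x (2*i+2)) / 2)" .
qed

lemma cell_forms_lower_bound:
  fixes a b c :: "nat \<Rightarrow> real"
  shows "real m / 3 * (\<Sum>i<m. (c i - (a i + b i) / 2)^2 + 4 * ((b i - a i) / 2)^2)
     \<le> real (2*m) / 6 * (\<Sum>i<m. 2 * (a i)^2 + 2 * (b i)^2 + 4 * (c i)^2 + 2 * a i * c i + 2 * b i * c i)
          - (\<Sum>i<m. c i + (a i + b i) / 2)^2"
proof -
  define u where "u i = c i / 2 + (a i + b i) / 4" for i
  have cell: "2 * (a i)^2 + 2 * (b i)^2 + 4 * (c i)^2 + 2 * a i * c i + 2 * b i * c i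
      = 12 * (u i)^2 + ((c i - (a i + b i) / 2)^2 + 4 * ((b i - a i) / 2)^2)" for i
    unfolding u_def by (simp add: power2_eq_square field_simps)
  have "real (2*m) / 6 * (\<Sum>i<m. 2 * (a i)^2 + 2 * (b i)^2 + 4 * (c i)^2 + 2 * a i * c i + 2 * b i * c i)
      = 4 * (real m * (\<Sum>i<m. (u i)^2))
        + real m / 3 * (\<Sum>i<m. (c i - (a i + b i) / 2)^2 + 4 * ((b i - a i) / 2)^2)"
    unfolding cell by (simp add: sum.distrib sum_distrib_left algebra_simps)
  moreover have "(\<Sum>i<m. c i + (a i + b i) / 2)^2 = 4 * (\<Sum>i<m. u i)^2"
  proof -
    have "(\<Sum>i<m. c i + (a i + b i) / 2) = 2 * (\<Sum>i<m. u i)"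
      unfolding u_def sum_distrib_left by (intro sum.cong refl) (simp add: field_simps)
    then show ?thesis by (simp add: power2_eq_square)
  qed
  moreover have "(\<Sum>i<m. u i)^2 \<le> real m * (\<Sum>i<m. (u i)^2)"
    using sum_squared_le_sum_of_squares[of u "{..<m}"] by (simp add: mult.commute)
  ultimately show ?thesis by linarith
qed

lemma Bmat_quadratic_form_ge:
  fixes v :: "real vec"
  assumes N: "N = 2*m" and m: "0 < m" and v: "v \<in> carrier_vec (N-1)"
  defines "x \<equiv> nodal N v"
  shows "real N / 6 * (\<Sum>i<m. (interp_defect x i)^2 + 4 * (cell_half_diff x i)^2) \<le> v \<bullet> (Bmat N *\<^sub>v v)"
proof -
  have "x 0 = 0" and "x (2*m) = 0" unfolding x_def nodal_def N by auto
  note cells = stencil_sums_by_cells[OF this]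
  have "v \<bullet> (Bmat N *\<^sub>v v)
    = real N / 6 * (\<Sum>k<N. x k * (4 * x k + x (k-1) + x (k+1))) - (\<Sum>k<N. x k)^2"
    unfolding x_def by (rule Bmat_quadratic_form[OF v]) (use N m in simp)
  then show ?thesis
    using cell_forms_lower_bound[where m = m and a = "\<lambda>i. x (2*i)" and b = "\<lambda>i. x (2*i+2)"
        and c = "\<lambda>i. x (2*i+1)"]
    unfolding N cells interp_defect_def cell_half_diff_def by simp
qed

section \<open>Prolongation as linear interpolation\<close>

lemma restr_carrier: "restr q \<in> carrier_mat (2^q div 2 - 1) (2^q - 1)"
  unfolding restr_def by simp

lemma prolong_carrier: "prolong q \<in> carrier_mat (2^q - 1) (2^q div 2 - 1)"
  unfolding prolong_def using restr_carrier by simp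

lemma prolong_mult_vec_nth:
  fixes z :: "real vec"
  assumes N: "2^q = 2*m" and z: "z \<in> carrier_vec (m - 1)" and k: "k < 2*m - 1"
  shows "(prolong q *\<^sub>v z) $ k
    = (if odd k then z $ (k div 2) else (nodal m z (k div 2) + nodal m z (k div 2 + 1)) / 2)"
proof -
  have "(prolong q *\<^sub>v z) $ k = (\<Sum>i<m-1. 2 * restr q $$ (i,k) * z $ i)"
    using z k N unfolding prolong_def restr_def
    by (simp add: mult_mat_vec_def scalar_prod_def atLeast0LessThan sum_distrib_left mult.assoc)
  also have "\<dots> = (if odd k then z $ (k div 2) else (nodal m z (k div 2) + nodal m z (k div 2 + 1)) / 2)"
  proof (cases "odd k")
    case True
    then obtain j where kj: "k = 2*j + 1" by (auto elim: oddE)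
    have "(\<Sum>i<m-1. 2 * restr q $$ (i,k) * z $ i) = (\<Sum>i<m-1. if i = j then z $ i else 0)"
      by (rule sum.cong) (use k N kj in \<open>auto simp: restr_def\<close>)
    then show ?thesis using True kj k by simp
  next
    case False
    then obtain j where kj: "k = 2*j" by (auto elim: evenE)
    have "(\<Sum>i<m-1. 2 * restr q $$ (i,k) * z $ i)
        = (\<Sum>i<m-1. if i = j then z $ i / 2 else 0) + (\<Sum>i<m-1. if i + 1 = j then z $ i / 2 else 0)"
      unfolding sum.distrib[symmetric]
      by (rule sum.cong) (use k N kj in \<open>auto simp: restr_def\<close>)
    also have "(\<Sum>i<m-1. if i + 1 = j then z $ i / 2 else 0) = (\<Sum>i<m-1. if i = j - 1 \<and> 1 \<le> j then z $ i / 2 else 0)"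
      by (rule sum.cong) auto
    finally show ?thesis using False kj k by (auto simp: nodal_def)
  qed
  finally show ?thesis .
qed

lemma nodal_prolong:
  fixes z :: "real vec"
  assumes N: "2^q = 2*m" and z: "z \<in> carrier_vec (m - 1)"
  shows "nodal (2*m) (prolong q *\<^sub>v z) (2*j) = nodal m z j"
    and "j < m \<Longrightarrow> nodal (2*m) (prolong q *\<^sub>v z) (2*j+1) = (nodal m z j + nodal m z (j+1)) / 2"
proof -
  show "nodal (2*m) (prolong q *\<^sub>v z) (2*j) = nodal m z j"
    using prolong_mult_vec_nth[OF N z, of "2*j - 1"]
    by (cases j) (auto simp: nodal_def)
  show "nodal (2*m) (prolong q *\<^sub>v z) (2*j+1) = (nodal m z j + nodal m z (j+1)) / 2" if "j < m"
    using prolong_mult_vec_nth[OF N z, of "2*j"] that by (simp add: nodal_def)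
qed

lemma scalar_prod_self_nodal:
  fixes v :: "real vec"
  assumes v: "v \<in> carrier_vec (N-1)" and N: "1 \<le> N"
  shows "v \<bullet> v = (\<Sum>k<N. (nodal N v k)^2)"
proof -
  have "(\<Sum>k<N. (nodal N v k)^2) = (\<Sum>k<Suc (N-1). (nodal N v k)^2)" using N by simp
  also have "\<dots> = (nodal N v 0)^2 + (\<Sum>k<N-1. (nodal N v (Suc k))^2)" by (rule sum.lessThan_Suc_shift)
  also have "\<dots> = v \<bullet> v"
    using v by (auto simp: nodal_def scalar_prod_def atLeast0LessThan power2_eq_square intro!: sum.cong)
  finally show ?thesis by simp
qed

lemma nodal_minus:
  "v \<in> carrier_vec (N-1) \<Longrightarrow> w \<in> carrier_vec (N-1) \<Longrightarrow> nodal N (v - w) k = nodal N v k - nodal N w k"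
  by (auto simp: nodal_def)

lemma prolong_interpolation_error:
  fixes w :: "real vec"
  assumes N: "2^q = 2*m" and m: "0 < m" and w: "w \<in> carrier_vec (2*m - 1)"
  defines "z \<equiv> vec (m-1) (\<lambda>i. w $ (2*i+1))"
  shows "(w - prolong q *\<^sub>v z) \<bullet> (w - prolong q *\<^sub>v z) = (\<Sum>i<m. (interp_defect (nodal (2*m) w) i)^2)"
proof -
  let ?e = "w - prolong q *\<^sub>v z" and ?x = "nodal (2*m) w"
  have z: "z \<in> carrier_vec (m-1)" unfolding z_def by simp
  have Pz: "prolong q *\<^sub>v z \<in> carrier_vec (2*m - 1)" using prolong_carrier[of q] N z by simp
  have coarse: "nodal m z j = ?x (2*j)" for j
    unfolding z_def nodal_def by (cases j) auto
  have "nodal (2*m) ?e (2*i) = 0" and "nodal (2*m) ?e (2*i+1) = interp_defect ?x i" if "i < m" for i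
    using nodal_prolong[OF N z] that
    unfolding nodal_minus[OF w Pz] coarse interp_defect_def by simp_all
  then have "(\<Sum>k<2*m. (nodal (2*m) ?e k)^2) = (\<Sum>i<m. (interp_defect ?x i)^2)"
    unfolding sum_lessThan_double by simp
  then show ?thesis
    using scalar_prod_self_nodal[of ?e "2*m"] w Pz m by simp
qed

lemma Bmat_pos_def:
  fixes v :: "real vec"
  assumes N: "N = 2*m" and m: "0 < m" and v: "v \<in> carrier_vec (N-1)" and nz: "v \<noteq> 0\<^sub>v (N-1)"
  shows "0 < v \<bullet> (Bmat N *\<^sub>v v)"
proof (rule ccontr)
  assume not_pos: "\<not> 0 < v \<bullet> (Bmat N *\<^sub>v v)"
  define x where "x = nodal N v"
  have "real N / 6 * (\<Sum>i<m. (interp_defect x i)^2 + 4 * (cell_half_diff x i)^2) \<le> 0"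
    using Bmat_quadratic_form_ge[OF N m v] not_pos unfolding x_def by linarith
  then have "(\<Sum>i<m. (interp_defect x i)^2 + 4 * (cell_half_diff x i)^2) \<le> 0"
    using N m by (simp add: mult_le_0_iff)
  then have "(\<Sum>i<m. (interp_defect x i)^2 + 4 * (cell_half_diff x i)^2) = 0"
    using sum_nonneg[of "{..<m}" "\<lambda>i. (interp_defect x i)^2 + 4 * (cell_half_diff x i)^2"] by simp
  then have cells: "interp_defect x i = 0" "cell_half_diff x i = 0" if "i < m" for i
    using that by (simp_all add: sum_nonneg_eq_0_iff add_nonneg_eq_0_iff)
  have even: "x (2*i) = 0" if "i \<le> m" for i
    using that
  proof (induction i)
    case 0
    then show ?case unfolding x_def nodal_def by simp
  next
    case (Suc i)
    then show ?case using cells(2)[of i] unfolding cell_half_diff_def by simp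
  qed
  have odd: "x (2*i+1) = 0" if "i < m" for i
    using cells(1)[OF that] even[of i] even[of "Suc i"] that unfolding interp_defect_def by simp
  have "v \<bullet> v = 0"
    using scalar_prod_self_nodal[OF v] N m even odd unfolding x_def[symmetric]
    by (simp add: sum_lessThan_double)
  then show False using nz scalar_prod_self_eq_0_iff[OF v] by simp
qed

lemma Bmat_approximation_property:
  fixes w :: "real vec"
  assumes N: "2^q = 2*m" and m: "0 < m" and w: "w \<in> carrier_vec (2^q - 1)"
  defines "z \<equiv> vec (m-1) (\<lambda>i. w $ (2*i+1))"
  shows "real (2^q) / 6 * ((w - prolong q *\<^sub>v z) \<bullet> (w - prolong q *\<^sub>v z)) \<le> w \<bullet> (Bmat (2^q) *\<^sub>v w)"
proof -
  let ?x = "nodal (2^q) w"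
  have "(\<Sum>i<m. (interp_defect ?x i)^2) \<le> (\<Sum>i<m. (interp_defect ?x i)^2 + 4 * (cell_half_diff ?x i)^2)"
    by (rule sum_mono) simp
  then have "real (2^q) / 6 * (\<Sum>i<m. (interp_defect ?x i)^2) \<le> w \<bullet> (Bmat (2^q) *\<^sub>v w)"
    using Bmat_quadratic_form_ge[OF N m w] by (smt (verit) mult_left_mono divide_nonneg_nonneg of_nat_0_le_iff)
  then show ?thesis
    using prolong_interpolation_error[OF N m] w N unfolding z_def by simp
qed

lemma prolong_mult_vec_eq_0:
  fixes z :: "real vec"
  assumes N: "2^q = 2*m" and z: "z \<in> carrier_vec (m - 1)" and Pz: "prolong q *\<^sub>v z = 0\<^sub>v (2^q - 1)"
  shows "z = 0\<^sub>v (m - 1)"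
proof (rule eq_vecI)
  fix i assume "i < dim_vec (0\<^sub>v (m - 1) :: real vec)"
  then have i: "i < m - 1" by simp
  have "z $ i = nodal m z (i + 1)" using i unfolding nodal_def by simp
  also have "\<dots> = nodal (2*m) (prolong q *\<^sub>v z) (2*(i+1))" using nodal_prolong(1)[OF N z, of "i + 1"] by simp
  also have "\<dots> = 0" unfolding Pz N nodal_def by simp
  finally show "z $ i = 0\<^sub>v (m - 1) $ i" using i by simp
qed (use z in simp)

section \<open>The two-grid method for \<open>A\<^sub>q\<close>\<close>

definition Aq_diag :: "nat \<Rightarrow> real \<Rightarrow> real" where
  "Aq_diag q b = (b / 2^q)^2 * (2 * 2^q / 3 - 1)"

lemma Aq_eq: "Aq q b = (b / 2^q)^2 \<cdot>\<^sub>m Bmat (2^q)"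
  by (simp add: Aq_def Let_def)

lemma Aq_carrier: "Aq q b \<in> carrier_mat (2^q - 1) (2^q - 1)"
  unfolding Aq_eq using Bmat_carrier by simp

lemma Aq_sym: "transpose_mat (Aq q b) = Aq q b"
  unfolding Aq_eq Bmat_def by (rule eq_matI) auto

lemma Aq_diag_pos: "1 \<le> q \<Longrightarrow> 0 < b \<Longrightarrow> 0 < Aq_diag q b"
  using one_le_power[of "2::real" q] power_increasing[of 1 q "2::real"]
  unfolding Aq_diag_def by (simp add: field_simps)

lemma diag_inv_diagpart_Aq: "diag_inv (diagpart (Aq q b)) = (1 / Aq_diag q b) \<cdot>\<^sub>m 1\<^sub>m (2^q - 1)"
  unfolding Aq_eq Aq_diag_def by (rule eq_matI) (auto simp: diag_inv_def diagpart_def Bmat_def)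

lemma diag_inv_diagpart_Aq_mult: "diag_inv (diagpart (Aq q b)) * Aq q b = (1 / Aq_diag q b) \<cdot>\<^sub>m Aq q b"
  unfolding diag_inv_diagpart_Aq mult_smult_assoc_mat[OF one_carrier_mat Aq_carrier]
    left_mult_one_mat[OF Aq_carrier] ..

lemma Kq_eq: "Kq q b \<omega> = 1\<^sub>m (2^q - 1) - (\<omega> / Aq_diag q b) \<cdot>\<^sub>m Aq q b"
proof -
  have "\<omega> \<cdot>\<^sub>m ((1 / Aq_diag q b) \<cdot>\<^sub>m Aq q b) = (\<omega> / Aq_diag q b) \<cdot>\<^sub>m Aq q b"
    by (rule eq_matI) auto
  then show ?thesis unfolding Kq_def diag_inv_diagpart_Aq_mult by simp
qed

lemma Aq_pos_def:
  assumes q: "1 \<le> q" and b: "0 < b" and v: "v \<in> carrier_vec (2^q - 1)" and nz: "v \<noteq> 0\<^sub>v (2^q - 1)"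
  shows "0 < v \<bullet> (Aq q b *\<^sub>v v)"
proof -
  have "(2::nat)^q = 2 * 2^(q-1)" using q by (simp flip: power_Suc)
  then have "0 < v \<bullet> (Bmat (2^q) *\<^sub>v v)" using Bmat_pos_def[of "2^q" "2^(q-1)" v] v nz by simp
  then show ?thesis
    unfolding Aq_eq using quadratic_form_smult_mat[OF Bmat_carrier v] b by simp
qed

lemma Aq_nonneg:
  assumes "1 \<le> q" and "0 < b" and "u \<in> carrier_vec (2^q - 1)"
  shows "0 \<le> u \<bullet> (Aq q b *\<^sub>v u)"
  using Aq_pos_def[OF assms] Aq_carrier[of q b] by (cases "u = 0\<^sub>v (2^q - 1)") auto

lemma Aq_rayleigh_bound:
  assumes q: "1 \<le> q" and b: "0 < b"
    and lmax: "lambda_max (diag_inv (diagpart (Aq q b)) * Aq q b) \<le> \<eta>0"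
  shows "1 \<le> \<eta>0"
    and "\<And>u. u \<in> carrier_vec (2^q - 1) \<Longrightarrow> u \<bullet> (Aq q b *\<^sub>v u) \<le> \<eta>0 * Aq_diag q b * (u \<bullet> u)"
proof -
  let ?n = "(2::nat)^q - 1" and ?A = "Aq q b" and ?d = "Aq_diag q b"
  have d: "0 < ?d" by (rule Aq_diag_pos[OF q b])
  have n: "0 < ?n" using q one_less_power[of "2::nat" q] by simp
  define M where "M = (1 / ?d) \<cdot>\<^sub>m ?A"
  have M_eq: "diag_inv (diagpart ?A) * ?A = M"
    unfolding M_def by (rule diag_inv_diagpart_Aq_mult)
  have M: "M \<in> carrier_mat ?n ?n" unfolding M_def using Aq_carrier by simp
  have M_sym: "transpose_mat M = M"
    unfolding M_def Aq_eq Bmat_def by (rule eq_matI) auto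
  have M_form: "u \<bullet> (M *\<^sub>v u) = u \<bullet> (?A *\<^sub>v u) / ?d" if "u \<in> carrier_vec ?n" for u
    unfolding M_def using quadratic_form_smult_mat[OF Aq_carrier that] by simp
  have ray: "u \<bullet> (M *\<^sub>v u) \<le> \<eta>0 * (u \<bullet> u)" if u: "u \<in> carrier_vec ?n" for u
    using quadratic_form_le_lambda_max[OF M M_sym n u] lmax scalar_prod_self_nonneg[of u]
    unfolding M_eq by (smt (verit) mult_right_mono)
  show "u \<bullet> (?A *\<^sub>v u) \<le> \<eta>0 * ?d * (u \<bullet> u)" if "u \<in> carrier_vec ?n" for u
    using ray[OF that] d unfolding M_form[OF that] by (simp add: divide_le_eq ac_simps)
  \<comment> \<open>the first unit vector has Rayleigh quotient 1 for \<open>D\<^sub>q\<^sup>-\<^sup>1 A\<^sub>q\<close>\<close>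
  have "unit_vec ?n 0 \<bullet> (?A *\<^sub>v unit_vec ?n 0) = ?A $$ (0, 0)"
    using n Aq_carrier[of q b] by simp
  also have "\<dots> = ?d" using n unfolding Aq_eq Aq_diag_def Bmat_def by simp
  finally show "1 \<le> \<eta>0"
    using ray[of "unit_vec ?n 0"] M_form[of "unit_vec ?n 0"] n d by simp
qed

lemma Aq_approximation_property:
  assumes q: "1 \<le> q" and b: "0 < b" and w: "w \<in> carrier_vec (2^q - 1)"
  shows "\<exists>z\<in>carrier_vec (2^q div 2 - 1).
    Aq_diag q b * ((w - prolong q *\<^sub>v z) \<bullet> (w - prolong q *\<^sub>v z)) \<le> 4 * (w \<bullet> (Aq q b *\<^sub>v w))"
proof
  define m :: nat where "m = 2^(q-1)"
  have N: "2^q = 2*m" unfolding m_def using q by (simp flip: power_Suc)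
  have m: "0 < m" unfolding m_def by simp
  define z where "z = vec (m-1) (\<lambda>i. w $ (2*i+1))"
  show "z \<in> carrier_vec (2^q div 2 - 1)" unfolding z_def N by simp
  let ?e2 = "(w - prolong q *\<^sub>v z) \<bullet> (w - prolong q *\<^sub>v z)" and ?c = "(b / 2^q)^2 :: real"
  have "Aq_diag q b \<le> 4 * ?c * (real (2^q) / 6)"
    unfolding Aq_diag_def by (simp add: field_simps)
  then have "Aq_diag q b * ?e2 \<le> 4 * ?c * (real (2^q) / 6) * ?e2"
    by (rule mult_right_mono) (rule scalar_prod_self_nonneg)
  also have "\<dots> = 4 * ?c * (real (2^q) / 6 * ?e2)" by simp
  also have "\<dots> \<le> 4 * ?c * (w \<bullet> (Bmat (2^q) *\<^sub>v w))"
    using Bmat_approximation_property[OF N m w] N unfolding z_def by (intro mult_left_mono) simp_all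
  also have "\<dots> = 4 * (w \<bullet> (Aq q b *\<^sub>v w))"
    unfolding Aq_eq using quadratic_form_smult_mat[OF Bmat_carrier w] by simp
  finally show "Aq_diag q b * ?e2 \<le> 4 * (w \<bullet> (Aq q b *\<^sub>v w))" .
qed

lemma Acoarse_mult_vec_eq_0:
  fixes z :: "real vec"
  assumes q: "1 \<le> q" and b: "0 < b" and z: "z \<in> carrier_vec (2^q div 2 - 1)"
    and Az: "Acoarse q b *\<^sub>v z = 0\<^sub>v (2^q div 2 - 1)"
  shows "z = 0\<^sub>v (2^q div 2 - 1)"
proof -
  let ?n = "(2::nat)^q - 1" and ?nc = "(2::nat)^q div 2 - 1"
  let ?A = "Aq q b" and ?R = "restr q" and ?P = "prolong q"
  have R: "?R \<in> carrier_mat ?nc ?n" by (rule restr_carrier)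
  have RT: "transpose_mat ?R \<in> carrier_mat ?n ?nc" using R by simp
  have P: "?P \<in> carrier_mat ?n ?nc" by (rule prolong_carrier)
  have A: "?A \<in> carrier_mat ?n ?n" by (rule Aq_carrier)
  have Pz: "?P *\<^sub>v z \<in> carrier_vec ?n" and APz: "?A *\<^sub>v (?P *\<^sub>v z) \<in> carrier_vec ?n"
    using P A z by auto
  have RTz: "transpose_mat ?R *\<^sub>v z \<in> carrier_vec ?n" using RT z by simp
  have "?P *\<^sub>v z = 2 \<cdot>\<^sub>v (transpose_mat ?R *\<^sub>v z)"
    unfolding prolong_def by (rule smult_mat_mult_vec[OF RT z])
  then have "(?P *\<^sub>v z) \<bullet> (?A *\<^sub>v (?P *\<^sub>v z)) = 2 * ((transpose_mat ?R *\<^sub>v z) \<bullet> (?A *\<^sub>v (?P *\<^sub>v z)))"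
    using smult_scalar_prod_distrib[OF RTz APz] by simp
  also have "(transpose_mat ?R *\<^sub>v z) \<bullet> (?A *\<^sub>v (?P *\<^sub>v z)) = z \<bullet> (?R *\<^sub>v (?A *\<^sub>v (?P *\<^sub>v z)))"
    by (rule transpose_vec_mult_scalar[OF R APz z])
  also have "?R *\<^sub>v (?A *\<^sub>v (?P *\<^sub>v z)) = Acoarse q b *\<^sub>v z"
  proof -
    have "(?R * ?A) *\<^sub>v (?P *\<^sub>v z) = ?R *\<^sub>v (?A *\<^sub>v (?P *\<^sub>v z))"
      by (rule assoc_mult_mat_vec[OF R A Pz])
    moreover have "(?R * ?A * ?P) *\<^sub>v z = (?R * ?A) *\<^sub>v (?P *\<^sub>v z)"
      by (rule assoc_mult_mat_vec[OF mult_carrier_mat[OF R A] P z])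
    ultimately show ?thesis unfolding Acoarse_def by simp
  qed
  finally have "(?P *\<^sub>v z) \<bullet> (?A *\<^sub>v (?P *\<^sub>v z)) = 0" using Az z by simp
  then have "?P *\<^sub>v z = 0\<^sub>v ?n" using Aq_pos_def[OF q b Pz] by fastforce
  moreover have "(2::nat)^q = 2 * 2^(q-1)" using q by (simp flip: power_Suc)
  ultimately show ?thesis using prolong_mult_vec_eq_0[of q "2^(q-1)" z] z by simp
qed

lemma Acoarse_carrier: "Acoarse q b \<in> carrier_mat (2^q div 2 - 1) (2^q div 2 - 1)"
  unfolding Acoarse_def by (rule mult_carrier_mat[OF mult_carrier_mat[OF restr_carrier Aq_carrier] prolong_carrier])

lemma Acoarse_minv:
  assumes "1 \<le> q" and "0 < b"
  shows "minv (Acoarse q b) \<in> carrier_mat (2^q div 2 - 1) (2^q div 2 - 1)"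
    and "Acoarse q b * minv (Acoarse q b) = 1\<^sub>m (2^q div 2 - 1)"
  using minv_right_inverse[OF Acoarse_carrier] Acoarse_mult_vec_eq_0[OF assms] by blast+

lemma Kq_Tq_carrier:
  assumes "1 \<le> q" and "0 < b"
  shows "Kq q b \<omega> * Tq q b \<in> carrier_mat (2^q - 1) (2^q - 1)"
proof -
  have "Tq q b \<in> carrier_mat (2^q - 1) (2^q - 1)"
    unfolding Tq_def by (rule minus_carrier_mat, rule mult_carrier_mat[OF mult_carrier_mat[OF
        mult_carrier_mat[OF prolong_carrier Acoarse_minv(1)[OF assms]] restr_carrier] Aq_carrier])
  moreover have "Kq q b \<omega> \<in> carrier_mat (2^q - 1) (2^q - 1)"
    unfolding Kq_eq by (rule minus_carrier_mat, rule smult_carrier_mat, rule Aq_carrier)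
  ultimately show ?thesis by simp
qed

lemma Kq_Tq_energy_contraction:
  assumes q: "1 \<le> q" and b: "0 < b"
    and lmax: "lambda_max (diag_inv (diagpart (Aq q b)) * Aq q b) \<le> \<eta>0"
    and eta: "\<eta> \<le> \<omega> * (2 - \<omega> * \<eta>0)" and eta_nonneg: "0 \<le> \<eta>"
    and v: "v \<in> carrier_vec (2^q - 1)"
  shows "((Kq q b \<omega> * Tq q b) *\<^sub>v v) \<bullet> (Aq q b *\<^sub>v ((Kq q b \<omega> * Tq q b) *\<^sub>v v))
    \<le> (1 - \<eta> / 4) * (v \<bullet> (Aq q b *\<^sub>v v))"
proof -
  let ?n = "(2::nat)^q - 1" and ?nc = "(2::nat)^q div 2 - 1"
  have R: "restr q \<in> carrier_mat ?nc ?n" by (rule restr_carrier)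
  have A: "Aq q b \<in> carrier_mat ?n ?n" by (rule Aq_carrier)
  note G = Acoarse_minv[OF q b]
  note psd = Aq_nonneg[OF q b]
  have "\<eta> \<le> 4"
    using eta damping_factor_le_1[OF Aq_rayleigh_bound(1)[OF q b lmax], of \<omega>] by simp
  with two_grid_energy_contraction[OF A Aq_sym psd R prolong_def G[unfolded Acoarse_def]
      Aq_approximation_property[OF q b] Aq_rayleigh_bound(2)[OF q b lmax] Aq_diag_pos[OF q b] _ eta
      eta_nonneg _ v]
  show ?thesis unfolding Kq_eq Tq_def Acoarse_def by simp
qed

lemma Kq_smoothing_property:
  assumes q: "1 \<le> q" and b: "0 < b"
    and lmax: "lambda_max (diag_inv (diagpart (Aq q b)) * Aq q b) \<le> \<eta>0"
    and eta: "\<eta> \<le> \<omega> * (2 - \<omega> * \<eta>0)" and v: "v \<in> carrier_vec (2^q - 1)"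
  shows "(vnormM (Aq q b) (Kq q b \<omega> *\<^sub>v v))^2
    \<le> (vnormM (Aq q b) v)^2 - \<eta> * (vnormM (diag_inv (diagpart (Aq q b))) (Aq q b *\<^sub>v v))^2"
proof -
  let ?n = "(2::nat)^q - 1" and ?A = "Aq q b" and ?d = "Aq_diag q b"
  have A: "?A \<in> carrier_mat ?n ?n" by (rule Aq_carrier)
  have d: "0 < ?d" by (rule Aq_diag_pos[OF q b])
  note psd = Aq_nonneg[OF q b]
  have Av: "?A *\<^sub>v v \<in> carrier_vec ?n" using A v by simp
  have Kv: "Kq q b \<omega> *\<^sub>v v \<in> carrier_vec ?n"
    unfolding Kq_eq by (rule mult_mat_vec_carrier[of _ ?n ?n]) (use A v in auto)
  have "(?A *\<^sub>v v) \<bullet> (diag_inv (diagpart ?A) *\<^sub>v (?A *\<^sub>v v)) = (?A *\<^sub>v v) \<bullet> (?A *\<^sub>v v) / ?d"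
    unfolding diag_inv_diagpart_Aq using quadratic_form_smult_mat[OF one_carrier_mat Av] Av by simp
  moreover have "0 \<le> (?A *\<^sub>v v) \<bullet> (?A *\<^sub>v v) / ?d"
    using d scalar_prod_self_nonneg[of "?A *\<^sub>v v"] by simp
  ultimately have "(vnormM (diag_inv (diagpart ?A)) (?A *\<^sub>v v))^2 = (?A *\<^sub>v v) \<bullet> (?A *\<^sub>v v) / ?d"
    using vnormM_square by metis
  then show ?thesis
    using richardson_energy_estimate[OF A Aq_sym Aq_rayleigh_bound(2)[OF q b lmax] d eta v]
      vnormM_square[OF psd[OF v]] vnormM_square[OF psd[OF Kv]]
    unfolding Kq_eq by simp
qed

theorem theorem4p5:
  fixes q :: nat and b \<eta>0 \<omega> \<eta> :: real
  assumes "q \<ge> 2" and "b > 0"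
    and "lambda_max (diag_inv (diagpart (Aq q b)) * Aq q b) \<le> \<eta>0" and "\<eta>0 < 3"
    and "0 < \<omega>" and "\<omega> < 2 / \<eta>0"
    and "0 < \<eta>" and "\<eta> \<le> \<omega> * (2 - \<omega> * \<eta>0)"
  shows "(\<forall>v \<in> carrier_vec (2^q - 1).
            (vnormM (Aq q b) (Kq q b \<omega> *\<^sub>v v))^2
              \<le> (vnormM (Aq q b) v)^2
                 - \<eta> * (vnormM (diag_inv (diagpart (Aq q b))) (Aq q b *\<^sub>v v))^2)
       \<and> opnormM (Aq q b) (Kq q b \<omega> * Tq q b) \<le> sqrt (1 - \<eta> / 4)
       \<and> sqrt (1 - \<eta> / 4) < 1"
proof -
  \<comment> \<open>only \<open>1 \<le> q\<close> and hypotheses 2, 3, 7, 8 are needed; the bounds on \<open>\<omega>\<close> and \<open>\<eta>0 < 3\<close> are unused\<close>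
  have q: "1 \<le> q" using assms(1) by simp
  have n: "0 < (2::nat)^q - 1" using one_less_power[of "2::nat" q] q by simp
  note KT = Kq_Tq_carrier[OF q assms(2)]
  show ?thesis
  proof (intro conjI ballI)
    show "(vnormM (Aq q b) (Kq q b \<omega> *\<^sub>v v))^2
        \<le> (vnormM (Aq q b) v)^2 - \<eta> * (vnormM (diag_inv (diagpart (Aq q b))) (Aq q b *\<^sub>v v))^2"
      if "v \<in> carrier_vec (2^q - 1)" for v
      using Kq_smoothing_property[OF q assms(2,3,8) that] .
    show "opnormM (Aq q b) (Kq q b \<omega> * Tq q b) \<le> sqrt (1 - \<eta> / 4)"
      using opnormM_le_sqrt[OF KT n Aq_pos_def[OF q assms(2)]]
        Kq_Tq_energy_contraction[OF q assms(2,3,8)] assms(7) by simp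
    show "sqrt (1 - \<eta> / 4) < 1" using assms(7) by simp
  qed
qed

end
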